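(* Let $\vartheta$ be primitive, geometrically compatible and recognisable, let $\mu\in\mathcal M$ and let $\mathbf P$ be a probability choice for $\vartheta$. Then every $\nu\in\Pi^{-1}(\mu)\cap\mathcal M[\mathbf P]$ satisfies \[ R^\nu=\lambda_{\mu,\mathbf P}^{-1}M(\mathbf P)R^\mu . \] In particular this holds for $\nu=T_{\mathbf P}(\mu)$ (which belongs to $\Pi^{-1}(\mu)\cap\mathcal M[\mathbf P]$), and if $\mu,\mu'\in\mathcal M$ satisfy $R^\mu=R^{\mu'}$ then $R^{T_{\mathbf P}(\mu)}=R^{T_{\mathbf P}(\mu')}$.
   Context: Standing assumptions: $\mathcal A$ finite alphabet; $\vartheta$ a random substitution (letters to non-empty finite sets of non-empty words, extended to words by concatenation $\vartheta(u_1\cdots u_n)=\{w_1\cdots w_n:w_i\in\vartheta(u_i)\}$), $X_\vartheta$ its subshift (sequences all of whose subwords are subwords of words in some $\vartheta^n(a)$) with shift $S$, $[u]$ the cylinder of $u$ at position $0$. Primitive: some marginal (choice $\theta(a)\in\vartheta(a)$) of some $\vartheta^n$ has primitive substitution matrix $M_{ab}=|\theta(b)|_a$. Geometrically compatible: some $\lambda>1$ and positive row vector $L$ with $LM=\lambda L$ for the substitution matrix of every marginal. Recognisable: every $y\in X_\vartheta$ has a unique decomposition $S^{-k}y=\cdots v_{-1}.v_0v_1\cdots$ with $x\in X_\vartheta$, $v_i\in\vartheta(x_i)$, $0\le k<|v_0|$ (all unique). $\mathcal M$ is the set of shift-invariant Borel probability measures on $X_\vartheta$; $R^\mu=(\mu([a]))_{a\in\mathcal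 A}$ as a column vector. A probability choice $\mathbf P$ assigns to each $a$ a probability vector $(\mathbf P_{v,a})_{v\in\vartheta(a)}$; $M(\mathbf P)_{ab}=\sum_{v\in\vartheta(b)}\mathbf P_{v,b}|v|_a$. Let $A=\vartheta(X_\vartheta)$ (all concatenations $\cdots v_{-1}.v_0v_1\cdots$, $v_i\in\vartheta(x_i)$, $x\in X_\vartheta$); by recognisability $A$ is identified with $\{(x_i,v_i)_i: x\in X_\vartheta,v_i\in\vartheta(x_i)\}\subset\mathcal B^{\mathbb Z}$, $\mathcal B=\{(a,v):v\in\vartheta(a)\}$, with first return map $S_A$ corresponding to the shift and return time $r_A=|v_0|$; $[(a_1,v_1)\cdots(a_n,v_n)]$ denotes the corresponding cylinder in $A$. For $\nu\in\mathcal M$, $\nu_A=\nu(\cdot\cap A)/\nu(A)$. Desubstitution $\Pi:\mathcal M\to\mathcal M$: $\Pi(\nu)([a_1\cdots a_n])=\sum_{v_1,\dots,v_n}\nu_A([(a_1,v_1)\cdots(a_n,v_n)])$. $\mathcal M[\mathbf P]$ is the set of $\nu\in\mathcal M$ with $\nu_A([(a,v)])=\mathbf P_{v,a}\sum_{u\in\vartheta(a)}\nu_A([(a,u)])$ for all $a$ and $v\in\vartheta(a)$. For $\mu\in\mathcal M$, $\vartheta_{\mathbf P}(\mu)$ is the $S_A$-invariant probability on $A$ with $\vartheta_{\mathbf P}(\mu)([(a_1,v_1)\cdots(a_n,v_n)])=\mu([a_1\cdots a_n])\prod_i\mathbf P_{v_i,a_i}$; $\lambda_{\mu,\mathbf P}=\sum_a\mu([a])\sum_{v\in\vartheta(a)}\mathbf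 P_{v,a}|v|$; the $\mathbf P$-transfer $T_{\mathbf P}(\mu)\in\mathcal M$ is defined by $T_{\mathbf P}(\mu)(f)=\lambda_{\mu,\mathbf P}^{-1}\int_A\sum_{i=0}^{r_A-1}f\circ S^i\,d\vartheta_{\mathbf P}(\mu)$ for continuous $f$. *)

theory Defs
  imports "HOL-Probability.Probability" "HOL-Library.Sublist"
begin

type_synonym 'a rsub = "'a \<Rightarrow> 'a list set"

definition random_subst :: "'a rsub \<Rightarrow> bool" where
  "random_subst \<sigma> \<longleftrightarrow> (\<forall>a. finite (\<sigma> a) \<and> \<sigma> a \<noteq> {} \<and> [] \<notin> \<sigma> a)"

definition subst_word :: "'a rsub \<Rightarrow> 'a list \<Rightarrow> 'a list set" where
  "subst_word \<sigma> u = concat ` listset (map \<sigma> u)"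

primrec subst_pow :: "'a rsub \<Rightarrow> nat \<Rightarrow> 'a rsub" where
  "subst_pow \<sigma> 0 a = {[a]}"
| "subst_pow \<sigma> (Suc n) a = (\<Union>w\<in>subst_pow \<sigma> n a. subst_word \<sigma> w)"

definition marginal :: "'a rsub \<Rightarrow> ('a \<Rightarrow> 'a list) \<Rightarrow> bool" where
  "marginal \<sigma> \<theta> \<longleftrightarrow> (\<forall>a. \<theta> a \<in> \<sigma> a)"

definition subst_matrix :: "('a \<Rightarrow> 'a list) \<Rightarrow> 'a \<Rightarrow> 'a \<Rightarrow> nat" where
  "subst_matrix \<theta> a b = count_list (\<theta> b) a"

primrec matpow :: "('a::finite \<Rightarrow> 'a \<Rightarrow> nat) \<Rightarrow> nat \<Rightarrow> 'a \<Rightarrow> 'a \<Rightarrow> nat" where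
  "matpow M 0 a b = (if a = b then 1 else 0)"
| "matpow M (Suc k) a b = (\<Sum>c\<in>UNIV. M a c * matpow M k c b)"

definition primitive_matrix :: "('a::finite \<Rightarrow> 'a \<Rightarrow> nat) \<Rightarrow> bool" where
  "primitive_matrix M \<longleftrightarrow> (\<exists>k\<ge>1. \<forall>a b. matpow M k a b > 0)"

definition primitive :: "('a::finite) rsub \<Rightarrow> bool" where
  "primitive \<sigma> \<longleftrightarrow> (\<exists>n\<ge>1. \<exists>\<theta>. marginal (subst_pow \<sigma> n) \<theta> \<and> primitive_matrix (subst_matrix \<theta>))"

definition geom_compatible :: "('a::finite) rsub \<Rightarrow> bool" where
  "geom_compatible \<sigma> \<longleftrightarrow> (\<exists>(lam::real) L. lam > 1 \<and> (\<forall>a. L a > (0::real)) \<and>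
     (\<forall>\<theta>. marginal \<sigma> \<theta> \<longrightarrow>
        (\<forall>b. (\<Sum>a\<in>UNIV. L a * real (subst_matrix \<theta> a b)) = lam * L b)))"

definition shift :: "(int \<Rightarrow> 'a) \<Rightarrow> int \<Rightarrow> 'a" where
  "shift x = (\<lambda>i. x (i + 1))"

definition language :: "'a rsub \<Rightarrow> 'a list set" where
  "language \<sigma> = {u. \<exists>n a w. w \<in> subst_pow \<sigma> n a \<and> sublist u w}"

definition subword :: "(int \<Rightarrow> 'a) \<Rightarrow> int \<Rightarrow> nat \<Rightarrow> 'a list" where
  "subword x i n = map (\<lambda>j. x (i + int j)) [0..<n]"

definition subshift :: "'a rsub \<Rightarrow> (int \<Rightarrow> 'a) set" where
  "subshift \<sigma> = {x. \<forall>i n. subword x i n \<in> language \<sigma>}"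

definition cyl :: "'a list \<Rightarrow> (int \<Rightarrow> 'a) set" where
  "cyl u = {x. \<forall>i<length u. x (int i) = u ! i}"

definition PT :: "(int \<Rightarrow> 'a) topology" where
  "PT = product_topology (\<lambda>_. discrete_topology UNIV) UNIV"

definition Bor :: "(int \<Rightarrow> 'a) measure" where
  "Bor = sigma (topspace PT) {U. openin PT U}"

text \<open>Shift-invariant Borel probability measures on \<open>X_\<sigma>\<close>, realised as Borel probability
  measures on the full sequence space that are concentrated on \<open>X_\<sigma>\<close>.\<close>
definition inv_measures :: "'a rsub \<Rightarrow> (int \<Rightarrow> 'a) measure set" where
  "inv_measures \<sigma> = {\<nu>. prob_space \<nu> \<and> sets \<nu> = sets Bor \<and> emeasure \<nu> (subshift \<sigma>) = 1
                          \<and> distr \<nu> \<nu> shift = \<nu>}"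

definition freq :: "(int \<Rightarrow> 'a) measure \<Rightarrow> 'a \<Rightarrow> real" where
  "freq \<nu> a = measure \<nu> (cyl [a])"

definition pos :: "(int \<Rightarrow> 'a list) \<Rightarrow> int \<Rightarrow> int" where
  "pos v i = (if 0 \<le> i then (\<Sum>m\<in>{0..<i}. int (length (v m)))
              else - (\<Sum>m\<in>{i..<0}. int (length (v m))))"

text \<open>\<open>is_concat v y\<close>: \<open>y = \<cdots> v_{-1}.v_0 v_1 \<cdots>\<close> (with \<open>v_0\<close> starting at position 0).\<close>
definition is_concat :: "(int \<Rightarrow> 'a list) \<Rightarrow> (int \<Rightarrow> 'a) \<Rightarrow> bool" where
  "is_concat v y \<longleftrightarrow> (\<forall>i. \<forall>j<length (v i). y (pos v i + int j) = v i ! j)"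

definition recognisable :: "'a rsub \<Rightarrow> bool" where
  "recognisable \<sigma> \<longleftrightarrow> (\<forall>y\<in>subshift \<sigma>. \<exists>!(x, v, k). x \<in> subshift \<sigma> \<and> (\<forall>i. v i \<in> \<sigma> (x i))
       \<and> 0 \<le> k \<and> k < int (length (v 0)) \<and> is_concat v (\<lambda>i. y (i - k)))"

text \<open>Cylinder \<open>[(a_1,v_1)\<cdots>(a_n,v_n)]\<close> in \<open>A = \<sigma>(X_\<sigma>)\<close>; \<open>Acyl \<sigma> []\<close> is \<open>A\<close> itself.\<close>
definition Acyl :: "'a rsub \<Rightarrow> ('a \<times> 'a list) list \<Rightarrow> (int \<Rightarrow> 'a) set" where
  "Acyl \<sigma> w = {y. \<exists>x v. x \<in> subshift \<sigma> \<and> (\<forall>i. v i \<in> \<sigma> (x i)) \<and> is_concat v y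
                    \<and> (\<forall>i<length w. x (int i) = fst (w ! i) \<and> v (int i) = snd (w ! i))}"

abbreviation Aset :: "'a rsub \<Rightarrow> (int \<Rightarrow> 'a) set" where
  "Aset \<sigma> \<equiv> Acyl \<sigma> []"

definition Bset :: "'a rsub \<Rightarrow> ('a \<times> 'a list) set" where
  "Bset \<sigma> = {(a, v). v \<in> \<sigma> a}"

definition return_time :: "'a rsub \<Rightarrow> (int \<Rightarrow> 'a) \<Rightarrow> nat" where
  "return_time \<sigma> y = (THE n. \<exists>x v. x \<in> subshift \<sigma> \<and> (\<forall>i. v i \<in> \<sigma> (x i)) \<and> is_concat v y
                            \<and> n = length (v 0))"

definition first_return :: "'a rsub \<Rightarrow> (int \<Rightarrow> 'a) \<Rightarrow> (int \<Rightarrow> 'a)" where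
  "first_return \<sigma> y = (if y \<in> Aset \<sigma> then (shift ^^ return_time \<sigma> y) y else y)"

definition induced :: "'a rsub \<Rightarrow> (int \<Rightarrow> 'a) measure \<Rightarrow> (int \<Rightarrow> 'a) set \<Rightarrow> real" where
  "induced \<sigma> \<nu> E = measure \<nu> (E \<inter> Aset \<sigma>) / measure \<nu> (Aset \<sigma>)"

text \<open>Value of \<open>\<Pi>(\<nu>)\<close> on the cylinder \<open>[a_1\<cdots>a_n]\<close>.\<close>
definition desub_cyl :: "'a rsub \<Rightarrow> (int \<Rightarrow> 'a) measure \<Rightarrow> 'a list \<Rightarrow> real" where
  "desub_cyl \<sigma> \<nu> u = (\<Sum>vs\<in>listset (map \<sigma> u). induced \<sigma> \<nu> (Acyl \<sigma> (zip u vs)))"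

text \<open>\<open>\<Pi>(\<nu>) = \<mu>\<close> (a measure in \<open>\<M>\<close> is determined by its values on cylinders).\<close>
definition desub_to :: "'a rsub \<Rightarrow> (int \<Rightarrow> 'a) measure \<Rightarrow> (int \<Rightarrow> 'a) measure \<Rightarrow> bool" where
  "desub_to \<sigma> \<nu> \<mu> \<longleftrightarrow> (\<forall>u. desub_cyl \<sigma> \<nu> u = measure \<mu> (cyl u))"

definition prob_choice :: "'a rsub \<Rightarrow> ('a list \<Rightarrow> 'a \<Rightarrow> real) \<Rightarrow> bool" where
  "prob_choice \<sigma> P \<longleftrightarrow> (\<forall>a. (\<forall>v\<in>\<sigma> a. P v a \<ge> 0) \<and> (\<Sum>v\<in>\<sigma> a. P v a) = 1)"

definition MP :: "'a rsub \<Rightarrow> ('a list \<Rightarrow> 'a \<Rightarrow> real) \<Rightarrow> 'a \<Rightarrow> 'a \<Rightarrow> real" where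
  "MP \<sigma> P a b = (\<Sum>v\<in>\<sigma> b. P v b * real (count_list v a))"

definition in_MP :: "'a rsub \<Rightarrow> ('a list \<Rightarrow> 'a \<Rightarrow> real) \<Rightarrow> (int \<Rightarrow> 'a) measure \<Rightarrow> bool" where
  "in_MP \<sigma> P \<nu> \<longleftrightarrow> \<nu> \<in> inv_measures \<sigma> \<and>
     (\<forall>a. \<forall>v\<in>\<sigma> a. induced \<sigma> \<nu> (Acyl \<sigma> [(a, v)])
                    = P v a * (\<Sum>u\<in>\<sigma> a. induced \<sigma> \<nu> (Acyl \<sigma> [(a, u)])))"

definition lam :: "('a::finite) rsub \<Rightarrow> (int \<Rightarrow> 'a) measure \<Rightarrow> ('a list \<Rightarrow> 'a \<Rightarrow> real) \<Rightarrow> real" where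
  "lam \<sigma> \<mu> P = (\<Sum>a\<in>UNIV. freq \<mu> a * (\<Sum>v\<in>\<sigma> a. P v a * real (length v)))"

text \<open>\<open>is_thetaP \<sigma> P \<mu> m\<close>: \<open>m\<close> is the \<open>S_A\<close>-invariant probability measure \<open>\<sigma>_P(\<mu>)\<close> on \<open>A\<close>
  (realised as a Borel probability measure on the full space concentrated on \<open>A\<close>).\<close>
definition is_thetaP :: "'a rsub \<Rightarrow> ('a list \<Rightarrow> 'a \<Rightarrow> real) \<Rightarrow> (int \<Rightarrow> 'a) measure
                           \<Rightarrow> (int \<Rightarrow> 'a) measure \<Rightarrow> bool" where
  "is_thetaP \<sigma> P \<mu> m \<longleftrightarrow> prob_space m \<and> sets m = sets Bor \<and> emeasure m (Aset \<sigma>) = 1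
     \<and> distr m m (first_return \<sigma>) = m
     \<and> (\<forall>w\<in>lists (Bset \<sigma>). measure m (Acyl \<sigma> w)
            = measure \<mu> (cyl (map fst w)) * prod_list (map (\<lambda>(a, v). P v a) w))"

text \<open>\<open>is_transfer \<sigma> P \<mu> m \<nu>\<close>: with \<open>m = \<sigma>_P(\<mu>)\<close>, \<open>\<nu> = T_P(\<mu>)\<close>.\<close>
definition is_transfer :: "('a::finite) rsub \<Rightarrow> ('a list \<Rightarrow> 'a \<Rightarrow> real) \<Rightarrow> (int \<Rightarrow> 'a) measure
                           \<Rightarrow> (int \<Rightarrow> 'a) measure \<Rightarrow> (int \<Rightarrow> 'a) measure \<Rightarrow> bool" where
  "is_transfer \<sigma> P \<mu> m \<nu> \<longleftrightarrow> is_thetaP \<sigma> P \<mu> m \<and> \<nu> \<in> inv_measures \<sigma> \<and>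
     (\<forall>f. continuous_map PT euclideanreal f \<longrightarrow>
        (\<integral>x. f x \<partial>\<nu>) = (1 / lam \<sigma> \<mu> P) *
           (\<integral>y. indicator (Aset \<sigma>) y * (\<Sum>i<return_time \<sigma> y. f ((shift ^^ i) y)) \<partial>m))"

end

theory Submission
  imports Defs
begin

text \<open>
  By recognisability every point $y$ of $X$ lies, for exactly one $(b,u)$ with $u \in \vartheta(b)$
  and exactly one $k < |u|$, in $S^{-k}[(b,u)]_A$, and then $y_0 = u_k$. Shift invariance of
  $\nu$ turns this partition into $\nu[a] = \sum_{(b,u)} |u|_a\, \nu([(b,u)]_A)$. If $\Pi(\nu) = \mu$
  and $\nu \in \mathcal M[\mathbf P]$, then $\nu_A[(b,u)] = \mathbf P_{u,b}\,\mu[b]$, hence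
  $R^\nu = \nu(A)\, M(\mathbf P) R^\mu$, and summing over $a$ forces $\nu(A) = 1/\lambda_{\mu,\mathbf P}$.

  For $\nu = T_{\mathbf P}(\mu)$ one tests the defining identity against continuous functions that
  agree on $X$ with the indicator of an $A$-cylinder; these exist because $A$-cylinders are
  relatively clopen in $X$ (compactness and recognisability). Since the orbit of a point of $A$
  stays outside $A$ until its return time, this gives
  $\nu([w]_A) = \vartheta_{\mathbf P}(\mu)([w]_A)/\lambda_{\mu,\mathbf P}$, from which
  $\Pi(\nu) = \mu$ and $\nu \in \mathcal M[\mathbf P]$ follow.
\<close>

section \<open>The sequence space\<close>

definition seq_topology :: "'b set \<Rightarrow> (int \<Rightarrow> 'b) topology" where
  "seq_topology F = product_topology (\<lambda>_. discrete_topology F) UNIV"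

lemma topspace_seq_topology: "topspace (seq_topology F) = {p. \<forall>i. p i \<in> F}"
  by (auto simp: seq_topology_def PiE_UNIV_domain)

lemma PT_eq_seq_topology: "PT = seq_topology UNIV"
  by (simp add: PT_def seq_topology_def)

lemma topspace_PT [simp]: "topspace PT = UNIV"
  by (simp add: PT_def)

lemma space_Bor [simp]: "space Bor = UNIV"
  by (simp add: Bor_def)

lemma sets_Bor: "sets Bor = sigma_sets UNIV {U. openin PT U}"
  by (simp add: Bor_def sets_measure_of_conv)

lemma openin_imp_sets_Bor: "openin PT U \<Longrightarrow> U \<in> sets Bor"
  by (simp add: sets_Bor)

lemma closedin_imp_sets_Bor: "closedin PT U \<Longrightarrow> U \<in> sets Bor"
  using sets.compl_sets[OF openin_imp_sets_Bor, of "UNIV - U"] by (simp add: closedin_def Diff_Diff_Int)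

lemma continuous_map_imp_measurable_Bor:
  fixes f :: "(int \<Rightarrow> 'a) \<Rightarrow> int \<Rightarrow> 'b"
  assumes "continuous_map PT PT f"
  shows "f \<in> measurable Bor Bor"
  unfolding Bor_def
proof (rule measurable_measure_of)
  fix U :: "(int \<Rightarrow> 'b) set" assume "U \<in> {U. openin PT U}"
  then have "openin PT {x \<in> topspace PT. f x \<in> U}"
    using assms by (intro openin_continuous_map_preimage) auto
  then have "f -` U \<in> sets Bor" by (intro openin_imp_sets_Bor) (simp add: vimage_def)
  then show "f -` U \<inter> space (sigma (topspace PT) {U. openin PT U})
      \<in> sets (sigma (topspace PT) {U. openin PT U})"
    by (simp add: Bor_def)
qed (auto simp: openin_subset)

lemma continuous_map_imp_borel_measurable_Bor:
  assumes "continuous_map PT euclideanreal f"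
  shows "f \<in> borel_measurable Bor"
proof (rule borel_measurableI)
  fix S :: "real set" assume "open S"
  then have "openin PT {x \<in> topspace PT. f x \<in> S}"
    using openin_continuous_map_preimage[OF assms, of S] open_openin[of S] by blast
  then show "f -` S \<inter> space Bor \<in> sets Bor"
    by (intro openin_imp_sets_Bor) (simp add: vimage_def)
qed

lemma continuous_map_seq_topology_map:
  assumes "f ` F \<subseteq> G"
  shows "continuous_map (seq_topology F) (seq_topology G) (\<lambda>p i. f (p i))"
  unfolding seq_topology_def continuous_map_componentwise_UNIV
proof
  fix k
  have "continuous_map (product_topology (\<lambda>_. discrete_topology F) UNIV) (discrete_topology G)
      (f \<circ> (\<lambda>p. p k))"
  proof (rule continuous_map_compose)
    show "continuous_map (product_topology (\<lambda>_. discrete_topology F) UNIV) (discrete_topology F)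
        (\<lambda>p. p k)"
      by (rule continuous_map_product_projection) simp
    show "continuous_map (discrete_topology F) (discrete_topology G) f"
      using assms by auto
  qed
  then show "continuous_map (product_topology (\<lambda>_. discrete_topology F) UNIV)
      (discrete_topology G) (\<lambda>p. f (p k))"
    by (simp add: o_def)
qed

lemma openin_seq_topology_coordinate:
  assumes "c \<in> F"
  shows "openin (seq_topology F) {p \<in> topspace (seq_topology F). p j = c}"
proof -
  have "continuous_map (seq_topology F) (discrete_topology F) (\<lambda>p. p j)"
    unfolding seq_topology_def by (rule continuous_map_product_projection) simp
  then have "openin (seq_topology F) {p \<in> topspace (seq_topology F). p j \<in> {c}}"
    by (rule openin_continuous_map_preimage) (use assms in simp)
  then show ?thesis by simp
qed

lemma openin_seq_topology_finite_dependence: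
  assumes "finite J" and "S \<subseteq> topspace (seq_topology F)"
    and "\<And>p q. p \<in> S \<Longrightarrow> q \<in> topspace (seq_topology F) \<Longrightarrow> \<forall>j\<in>J. p j = q j \<Longrightarrow> q \<in> S"
  shows "openin (seq_topology F) S"
  unfolding openin_subopen[of _ S]
proof
  fix p assume p: "p \<in> S"
  let ?T = "topspace (seq_topology F) \<inter> (\<Inter>j\<in>J. {q \<in> topspace (seq_topology F). q j = p j})"
  have "openin (seq_topology F) ?T"
  proof (cases "J = {}")
    case False
    have "openin (seq_topology F) (\<Inter>j\<in>J. {q \<in> topspace (seq_topology F). q j = p j})"
      using assms(1,2) False p
      by (intro openin_INT2 openin_seq_topology_coordinate) (auto simp: topspace_seq_topology)
    then show ?thesis by (simp add: openin_subset inf.absorb2)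
  qed simp
  moreover have "p \<in> ?T" using assms(2) p by auto
  moreover have "?T \<subseteq> S" using assms(3)[OF p] by auto
  ultimately show "\<exists>T. openin (seq_topology F) T \<and> p \<in> T \<and> T \<subseteq> S" by blast
qed

lemma closedin_seq_topology_finite_dependence:
  assumes "finite J" and "S \<subseteq> topspace (seq_topology F)"
    and "\<And>p q. p \<in> S \<Longrightarrow> q \<in> topspace (seq_topology F) \<Longrightarrow> \<forall>j\<in>J. p j = q j \<Longrightarrow> q \<in> S"
  shows "closedin (seq_topology F) S"
proof -
  have "openin (seq_topology F) (topspace (seq_topology F) - S)"
  proof (rule openin_seq_topology_finite_dependence[OF assms(1)])
    fix p q assume p: "p \<in> topspace (seq_topology F) - S" and q: "q \<in> topspace (seq_topology F)"
      and pq: "\<forall>j\<in>J. p j = q j"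
    have "q \<notin> S"
    proof
      assume "q \<in> S"
      moreover have "p \<in> topspace (seq_topology F)" "\<forall>j\<in>J. q j = p j" using p pq by auto
      ultimately have "p \<in> S" by (rule assms(3))
      with p show False by simp
    qed
    with q show "q \<in> topspace (seq_topology F) - S" by simp
  qed (rule Diff_subset)
  then show ?thesis using assms(2) by (simp add: closedin_def)
qed

lemma closedin_PT_finite_dependence:
  assumes "finite J" and "\<And>p q. p \<in> S \<Longrightarrow> \<forall>j\<in>J. p j = q j \<Longrightarrow> q \<in> S"
  shows "closedin PT S"
  unfolding PT_eq_seq_topology
proof (rule closedin_seq_topology_finite_dependence[OF assms(1)])
  show "S \<subseteq> topspace (seq_topology UNIV)" by (simp add: topspace_seq_topology)
qed (rule assms(2))

lemma compact_space_seq_topology: "finite F \<Longrightarrow> compact_space (seq_topology F)"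
  by (simp add: seq_topology_def compact_space_product_topology compact_space_discrete_topology)

lemma Hausdorff_space_PT: "Hausdorff_space PT"
  by (simp add: PT_def Hausdorff_space_product_topology)

lemma normal_space_PT: "normal_space (PT :: (int \<Rightarrow> 'a::finite) topology)"
proof (rule compact_Hausdorff_or_regular_imp_normal_space)
  show "compact_space (PT :: (int \<Rightarrow> 'a) topology)"
    unfolding PT_eq_seq_topology by (simp add: compact_space_seq_topology)
qed (simp add: Hausdorff_space_PT)

section \<open>Shifts and words\<close>

definition shift_by :: "int \<Rightarrow> (int \<Rightarrow> 'a) \<Rightarrow> int \<Rightarrow> 'a" where
  "shift_by k y = (\<lambda>i. y (i + k))"

lemma continuous_map_shift_by: "continuous_map PT PT (shift_by k)"
  unfolding PT_def shift_by_def continuous_map_componentwise_UNIV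
  by (auto intro: continuous_map_product_projection)

lemma shift_eq_shift_by: "shift = shift_by 1"
  by (simp add: shift_def shift_by_def fun_eq_iff)

lemma shift_by_shift_by: "shift_by k (shift_by l y) = shift_by (k + l) y"
  by (simp add: shift_by_def ac_simps)

lemma shift_by_0 [simp]: "shift_by 0 y = y"
  by (simp add: shift_by_def)

lemma funpow_shift: "(shift ^^ n) y = shift_by (int n) y"
  by (induction n arbitrary: y) (auto simp: shift_eq_shift_by shift_by_shift_by add.commute)

lemma shift_by_minus: "shift_by (- k) y = (\<lambda>i. y (i - k))"
  by (simp add: shift_by_def)

lemma subword_add: "subword y i (a + b) = subword y i a @ subword y (i + int a) b"
  by (induction b) (simp_all add: subword_def ac_simps)

lemma subword_shift_by: "subword (shift_by k x) i n = subword x (i + k) n"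
  by (simp add: subword_def shift_by_def ac_simps)

lemma sublist_subword:
  assumes "p \<le> j" "j + int n \<le> p + int M"
  shows "sublist (subword y j n) (subword y p M)"
proof -
  define a where "a = nat (j - p)"
  have M: "M = a + n + (M - a - n)" and j: "j = p + int a" using assms by (simp_all add: a_def)
  have "subword y p M = subword y p a @ subword y j n @ subword y (j + int n) (M - a - n)"
    by (subst M) (simp add: subword_add j add.assoc)
  then show ?thesis by simp
qed

lemma language_sublist: "sublist u w \<Longrightarrow> w \<in> language \<sigma> \<Longrightarrow> u \<in> language \<sigma>"
  unfolding language_def by (auto intro: sublist_order.order_trans)

lemma subst_word_Nil [simp]: "subst_word \<sigma> [] = {[]}"
  by (simp add: subst_word_def)

lemma subst_word_Cons: "subst_word \<sigma> (c # u) = {a @ b |a b. a \<in> \<sigma> c \<and> b \<in> subst_word \<sigma> u}"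
  by (auto simp: subst_word_def set_Cons_def image_def) (blast, metis concat.simps(2))

lemma subst_word_append:
  "subst_word \<sigma> (u1 @ u2) = {a @ b |a b. a \<in> subst_word \<sigma> u1 \<and> b \<in> subst_word \<sigma> u2}"
proof (induction u1)
  case (Cons c u1)
  show ?case
    unfolding append_Cons subst_word_Cons Cons
    by (auto, metis append.assoc, metis append.assoc)
qed simp

lemma subst_word_nonempty: "random_subst \<sigma> \<Longrightarrow> subst_word \<sigma> u \<noteq> {}"
  by (induction u) (auto simp: subst_word_Cons random_subst_def)

lemma subst_word_language:
  assumes "random_subst \<sigma>" and "u \<in> language \<sigma>" and "u' \<in> subst_word \<sigma> u"
  shows "u' \<in> language \<sigma>"
proof -
  obtain n a w where w: "w \<in> subst_pow \<sigma> n a" "sublist u w" using assms(2) by (auto simp: language_def)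
  then obtain w1 w2 where ww: "w = w1 @ u @ w2" by (auto simp: sublist_def)
  obtain w1' w2' where "w1' \<in> subst_word \<sigma> w1" "w2' \<in> subst_word \<sigma> w2"
    using subst_word_nonempty[OF assms(1)] by blast
  then have "w1' @ u' @ w2' \<in> subst_word \<sigma> w"
    unfolding ww subst_word_append using assms(3) by blast
  then have "w1' @ u' @ w2' \<in> subst_pow \<sigma> (Suc n) a" using w(1) by auto
  then show ?thesis unfolding language_def by blast
qed

lemma shift_by_in_subshift: "x \<in> subshift \<sigma> \<Longrightarrow> shift_by k x \<in> subshift \<sigma>"
  by (simp add: subshift_def subword_shift_by)

lemma closedin_subshift: "closedin PT (subshift \<sigma>)"
proof -
  have "subshift \<sigma> = (\<Inter>(i, n). {x. subword x i n \<in> language \<sigma>})"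
    by (auto simp: subshift_def)
  moreover have "closedin PT {x. subword x i n \<in> language \<sigma>}" for i n
  proof (rule closedin_PT_finite_dependence[of "{i..<i + int n}"])
    fix p q :: "int \<Rightarrow> 'a"
    assume "p \<in> {x. subword x i n \<in> language \<sigma>}" "\<forall>j\<in>{i..<i + int n}. p j = q j"
    moreover from this(2) have "subword p i n = subword q i n" by (auto simp: subword_def)
    ultimately show "q \<in> {x. subword x i n \<in> language \<sigma>}" by simp
  qed simp
  ultimately show ?thesis by (auto intro!: closedin_Inter)
qed

section \<open>Concatenations\<close>

lemma pos_0 [simp]: "pos v 0 = 0"
  by (simp add: pos_def)

lemma pos_add_one: "pos v (i + 1) = pos v i + int (length (v i))"
proof (cases "0 \<le> i")
  case True
  then have "{0..<i + 1} = insert i {0..<i}" by auto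
  then show ?thesis using True by (simp add: pos_def)
next
  case False
  show ?thesis
  proof (cases "i = -1")
    case True
    have "{-1..<0::int} = {-1}" by auto
    then show ?thesis using True by (simp add: pos_def)
  next
    case False': False
    have "{i..<0} = insert i {i + 1..<0}" using False by auto
    then show ?thesis using False False' by (simp add: pos_def)
  qed
qed

lemma pos_add_nat: "pos v (i + int m) = pos v i + (\<Sum>t<m. int (length (v (i + int t))))"
proof (induction m)
  case (Suc m)
  have "pos v (i + int (Suc m)) = pos v (i + int m) + int (length (v (i + int m)))"
    using pos_add_one[of v "i + int m"] by (simp add: ac_simps)
  then show ?case using Suc by simp
qed simp

lemma pos_mono: "pos v i \<le> pos v (i + int m)"
  by (simp add: pos_add_nat sum_nonneg)

lemma pos_add_nat_ge:
  assumes "\<forall>i. v i \<noteq> []"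
  shows "pos v i + int m \<le> pos v (i + int m)"
proof -
  have "int m \<le> (\<Sum>t<m. int (length (v (i + int t))))"
    using sum_mono[of "{..<m}" "\<lambda>_. 1::int" "\<lambda>t. int (length (v (i + int t)))"] assms
    by (simp add: Suc_le_eq)
  then show ?thesis by (simp add: pos_add_nat)
qed

lemma pos_le_self: "\<forall>i. v i \<noteq> [] \<Longrightarrow> i \<le> 0 \<Longrightarrow> pos v i \<le> i"
  using pos_add_nat_ge[of v i "nat (- i)"] by simp

lemma pos_ge_self: "\<forall>i. v i \<noteq> [] \<Longrightarrow> 0 \<le> i \<Longrightarrow> i \<le> pos v i"
  using pos_add_nat_ge[of v 0 "nat i"] by simp

lemma pos_cong:
  assumes "\<forall>m\<in>{min 0 i..<max 0 i}. v m = v' m"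
  shows "pos v i = pos v' i"
  using assms unfolding pos_def by (auto intro!: sum.cong)

lemma abs_pos_le:
  assumes "\<forall>m. length (v m) \<le> K"
  shows "\<bar>pos v i\<bar> \<le> \<bar>i\<bar> * int K"
proof (cases "0 \<le> i")
  case True
  have "(\<Sum>m\<in>{0..<i}. int (length (v m))) \<le> (\<Sum>m\<in>{0..<i}. int K)"
    using assms by (intro sum_mono) auto
  then show ?thesis using True by (simp add: pos_def sum_nonneg)
next
  case False
  have "(\<Sum>m\<in>{i..<0}. int (length (v m))) \<le> (\<Sum>m\<in>{i..<0}. int K)"
    using assms by (intro sum_mono) auto
  then show ?thesis using False by (simp add: pos_def sum_nonneg)
qed

lemma subword_pos_eq_block:
  assumes "is_concat v y"
  shows "subword y (pos v i) (length (v i)) = v i"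
  using assms by (intro nth_equalityI) (auto simp: is_concat_def subword_def)

lemma subword_pos_eq_concat:
  assumes "is_concat v y"
  shows "subword y (pos v i) (nat (pos v (i + int m) - pos v i)) = concat (map (\<lambda>t. v (i + int t)) [0..<m])"
proof (induction m)
  case (Suc m)
  define a where "a = nat (pos v (i + int m) - pos v i)"
  have a: "pos v i + int a = pos v (i + int m)" using pos_mono[of v i m] by (simp add: a_def)
  have "nat (pos v (i + int (Suc m)) - pos v i) = a + length (v (i + int m))"
    using pos_add_one[of v "i + int m"] pos_mono[of v i m] by (simp add: a_def ac_simps)
  then have "subword y (pos v i) (nat (pos v (i + int (Suc m)) - pos v i))
      = subword y (pos v i) a @ v (i + int m)"
    using subword_pos_eq_block[OF assms, of "i + int m"] by (simp add: subword_add a)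
  then show ?case using Suc by (simp add: a_def)
qed (simp add: subword_def)

lemma concat_in_subshift:
  assumes "random_subst \<sigma>" and "x \<in> subshift \<sigma>" and "\<forall>i. v i \<in> \<sigma> (x i)" and "is_concat v y"
  shows "y \<in> subshift \<sigma>"
  unfolding subshift_def
proof (intro CollectI allI)
  fix j :: int and n :: nat
  have nonempty: "\<forall>i. v i \<noteq> []" using assms(1,3) by (metis random_subst_def)
  define i where "i = min j 0"
  define m where "m = nat (max (j + int n) 0 - i)"
  have "pos v i \<le> j"
    using pos_le_self[OF nonempty, of j] by (cases "j \<le> 0") (auto simp: i_def)
  moreover have "j + int n \<le> pos v (i + int m)"
    using pos_ge_self[OF nonempty, of "j + int n"]
    by (cases "0 \<le> j + int n") (auto simp: i_def m_def)
  ultimately have "sublist (subword y j n) (subword y (pos v i) (nat (pos v (i + int m) - pos v i)))"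
    by (intro sublist_subword) auto
  moreover have "concat (map (\<lambda>t. v (i + int t)) [0..<m]) \<in> subst_word \<sigma> (subword x i m)"
    using assms(3) by (induction m) (auto simp: subword_def subst_word_append subst_word_Cons)
  then have "concat (map (\<lambda>t. v (i + int t)) [0..<m]) \<in> language \<sigma>"
    using subst_word_language[OF assms(1)] assms(2) by (auto simp: subshift_def)
  ultimately show "subword y j n \<in> language \<sigma>"
    by (metis language_sublist subword_pos_eq_concat[OF assms(4)])
qed

section \<open>Recognisability and cylinders in $A$\<close>

definition decomposition :: "'a rsub \<Rightarrow> (int \<Rightarrow> 'a) \<Rightarrow> (int \<Rightarrow> 'a) \<Rightarrow> (int \<Rightarrow> 'a list) \<Rightarrow> int \<Rightarrow> bool"
  where "decomposition \<sigma> y x v k \<longleftrightarrow> x \<in> subshift \<sigma> \<and> (\<forall>i. v i \<in> \<sigma> (x i))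
       \<and> 0 \<le> k \<and> k < int (length (v 0)) \<and> is_concat v (\<lambda>i. y (i - k))"

lemma recognisable_iff:
  "recognisable \<sigma> \<longleftrightarrow> (\<forall>y\<in>subshift \<sigma>. \<exists>!(x, v, k). decomposition \<sigma> y x v k)"
  by (simp add: recognisable_def decomposition_def)

lemma decomposition_exists:
  assumes "recognisable \<sigma>" and "y \<in> subshift \<sigma>"
  obtains x v k where "decomposition \<sigma> y x v k"
  using assms by (auto simp: recognisable_iff)

lemma decomposition_unique:
  assumes "recognisable \<sigma>" and "y \<in> subshift \<sigma>"
    and "decomposition \<sigma> y x v k" and "decomposition \<sigma> y x' v' k'"
  shows "x = x'" "v = v'" "k = k'"
proof -
  have "\<exists>!t. case t of (x, v, k) \<Rightarrow> decomposition \<sigma> y x v k"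
    using assms(1,2) by (simp add: recognisable_iff)
  then have "(x, v, k) = (x', v', k')" using assms(3,4) by (metis (mono_tags) case_prod_conv)
  then show "x = x'" "v = v'" "k = k'" by simp_all
qed

lemma Acyl_subset_Aset: "Acyl \<sigma> w \<subseteq> Aset \<sigma>"
  by (auto simp: Acyl_def)

lemma Aset_subset_subshift: "random_subst \<sigma> \<Longrightarrow> Aset \<sigma> \<subseteq> subshift \<sigma>"
  by (auto simp: Acyl_def intro: concat_in_subshift)

lemma finite_Bset: "random_subst (\<sigma> :: ('a::finite) rsub) \<Longrightarrow> finite (Bset \<sigma>)"
proof -
  assume "random_subst \<sigma>"
  moreover have "Bset \<sigma> = (\<Union>a. Pair a ` \<sigma> a)" by (auto simp: Bset_def)
  ultimately show ?thesis by (simp add: random_subst_def)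
qed

lemma shift_by_in_Acyl_of_decomposition:
  assumes "decomposition \<sigma> y x v k"
  shows "shift_by (- k) y \<in> Acyl \<sigma> [(x 0, v 0)]"
  using assms unfolding Acyl_def decomposition_def shift_by_minus by auto

lemma decomposition_of_shift_by_in_Acyl:
  assumes "shift_by (- k) y \<in> Acyl \<sigma> [(b, u)]" and "0 \<le> k" and "k < int (length u)"
  obtains x v where "decomposition \<sigma> y x v k" "x 0 = b" "v 0 = u"
  using assms unfolding Acyl_def decomposition_def shift_by_minus by auto

lemma decomposition_of_Acyl:
  assumes "random_subst \<sigma>" and "y \<in> Acyl \<sigma> w"
  obtains x v where "decomposition \<sigma> y x v 0"
    "\<forall>i<length w. x (int i) = fst (w ! i) \<and> v (int i) = snd (w ! i)"
proof -
  obtain x v where xv: "x \<in> subshift \<sigma>" "\<forall>i. v i \<in> \<sigma> (x i)" "is_concat v y"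
    "\<forall>i<length w. x (int i) = fst (w ! i) \<and> v (int i) = snd (w ! i)"
    using assms(2) by (auto simp: Acyl_def)
  moreover have "v 0 \<noteq> []" using xv(2) assms(1) by (metis random_subst_def)
  ultimately show thesis using that by (simp add: decomposition_def)
qed

lemma decomposition_nth_0:
  assumes "decomposition \<sigma> y x v k"
  shows "y 0 = v 0 ! nat k"
  using assms unfolding decomposition_def is_concat_def
  by (metis add_0 diff_self nat_less_iff of_nat_0_le_iff of_nat_eq_iff int_nat_eq pos_0)

text \<open>A point of \<open>marked_decompositions \<sigma> w\<close> records, at every position \<open>i\<close>, the pair
  \<open>(x_i, v_i)\<close> and the letter \<open>y_i\<close>; forgetting the pairs maps this set onto \<open>[w]_A\<close>.\<close>

definition marked_decompositions :: "'a rsub \<Rightarrow> ('a \<times> 'a list) list \<Rightarrow> (int \<Rightarrow> ('a \<times> 'a list) \<times> 'a) set"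
  where "marked_decompositions \<sigma> w =
    {q. (\<forall>i. q i \<in> Bset \<sigma> \<times> UNIV) \<and> (\<lambda>i. fst (fst (q i))) \<in> subshift \<sigma>
        \<and> is_concat (\<lambda>i. snd (fst (q i))) (\<lambda>i. snd (q i)) \<and> (\<forall>k<length w. fst (q (int k)) = w ! k)}"

lemma Acyl_eq_image: "Acyl \<sigma> w = (\<lambda>q i. snd (q i)) ` marked_decompositions \<sigma> w"
proof
  show "Acyl \<sigma> w \<subseteq> (\<lambda>q i. snd (q i)) ` marked_decompositions \<sigma> w"
  proof
    fix y assume "y \<in> Acyl \<sigma> w"
    then obtain x v where "x \<in> subshift \<sigma>" "\<forall>i. v i \<in> \<sigma> (x i)" "is_concat v y"
      "\<forall>i<length w. x (int i) = fst (w ! i) \<and> v (int i) = snd (w ! i)"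
      unfolding Acyl_def by blast
    then have "(\<lambda>i. ((x i, v i), y i)) \<in> marked_decompositions \<sigma> w"
      by (simp add: marked_decompositions_def Bset_def prod_eq_iff)
    then show "y \<in> (\<lambda>q i. snd (q i)) ` marked_decompositions \<sigma> w" by (rule rev_image_eqI) simp
  qed
  show "(\<lambda>q i. snd (q i)) ` marked_decompositions \<sigma> w \<subseteq> Acyl \<sigma> w"
  proof
    fix y assume "y \<in> (\<lambda>q i. snd (q i)) ` marked_decompositions \<sigma> w"
    then obtain q where q: "q \<in> marked_decompositions \<sigma> w" and y: "y = (\<lambda>i. snd (q i))" by blast
    from q have "\<forall>i. snd (fst (q i)) \<in> \<sigma> (fst (fst (q i)))"
      by (simp add: marked_decompositions_def Bset_def mem_Times_iff case_prod_beta)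
    then show "y \<in> Acyl \<sigma> w"
      using q unfolding y Acyl_def marked_decompositions_def
      by (intro CollectI exI[of _ "\<lambda>i. fst (fst (q i))"] exI[of _ "\<lambda>i. snd (fst (q i))"])
        (simp add: prod_eq_iff)
  qed
qed

text \<open>With block lengths bounded by \<open>K\<close>, the block condition at \<open>(i, j)\<close> only involves the
  coordinates in \<open>[-N, N]\<close>, \<open>N = (|i| + 1) K + |i|\<close>, so it defines a clopen set.\<close>

lemma closedin_block_condition:
  assumes K: "\<forall>p\<in>B. length (snd p) \<le> K"
  shows "closedin (seq_topology (B \<times> C))
    {q \<in> topspace (seq_topology (B \<times> C)). j < length (snd (fst (q i))) \<longrightarrow>
       snd (q (pos (\<lambda>i. snd (fst (q i))) i + int j)) = snd (fst (q i)) ! j}"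
    (is "closedin _ ?S")
proof -
  define N where "N = (\<bar>i\<bar> + 1) * int K + \<bar>i\<bar>"
  show ?thesis
  proof (rule closedin_seq_topology_finite_dependence[of "{- N..N}"])
    fix p q assume p: "p \<in> ?S" and q: "q \<in> topspace (seq_topology (B \<times> C))"
      and pq: "\<forall>m\<in>{- N..N}. p m = q m"
    let ?vp = "\<lambda>i. snd (fst (p i))" and ?vq = "\<lambda>i. snd (fst (q i))"
    have "\<bar>i\<bar> \<le> N" by (simp add: N_def)
    then have "\<forall>m\<in>{min 0 i..<max 0 i}. p m = q m" using pq by (cases "0 \<le> i") auto
    then have pos_eq: "pos ?vp i = pos ?vq i" by (intro pos_cong) simp
    have pi: "p i = q i" using pq \<open>\<bar>i\<bar> \<le> N\<close> by (simp add: abs_le_iff)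
    have "q (pos ?vq i + int j) = p (pos ?vp i + int j)" if j: "j < length (?vp i)"
    proof -
      have "\<forall>m. length (?vp m) \<le> K"
        using p K by (auto simp: topspace_seq_topology mem_Times_iff)
      then have "\<bar>pos ?vp i\<bar> \<le> \<bar>i\<bar> * int K" and "int j \<le> int K"
        using j by (auto simp: abs_pos_le less_imp_le_nat order.strict_trans2)
      then have "\<bar>pos ?vp i + int j\<bar> \<le> N" by (simp add: N_def algebra_simps)
      then show ?thesis using pq pos_eq by (simp add: abs_le_iff)
    qed
    then show "q \<in> ?S" using p q by (simp add: pi)
  qed auto
qed

lemma closedin_marked_decompositions:
  assumes "random_subst (\<sigma> :: ('a::finite) rsub)"
  shows "closedin (seq_topology (Bset \<sigma> \<times> UNIV)) (marked_decompositions \<sigma> w)"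
proof -
  define T where "T = seq_topology (Bset \<sigma> \<times> (UNIV :: 'a set))"
  obtain K where K: "\<forall>p\<in>Bset \<sigma>. length (snd p) \<le> K"
    using finite_nat_set_iff_bounded_le[of "(\<lambda>p. length (snd p)) ` Bset \<sigma>"] finite_Bset[OF assms]
    by auto
  define C1 where "C1 = {q \<in> topspace T. (\<lambda>i. fst (fst (q i))) \<in> subshift \<sigma>}"
  define C2 where "C2 = (\<lambda>(i, j). {q \<in> topspace T. j < length (snd (fst (q i))) \<longrightarrow>
      snd (q (pos (\<lambda>i. snd (fst (q i))) i + int j)) = snd (fst (q i)) ! j})"
  define C3 where "C3 = (\<lambda>k. {q \<in> topspace T. k < length w \<longrightarrow> fst (q (int k)) = w ! k})"
  have "closedin (seq_topology UNIV) (subshift \<sigma>)"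
    using closedin_subshift by (simp add: PT_eq_seq_topology)
  then have "closedin T C1"
    unfolding C1_def T_def
    by (rule closedin_continuous_map_preimage[OF continuous_map_seq_topology_map, rotated]) simp
  moreover have "closedin T (C2 ij)" for ij
    using closedin_block_condition[OF K] by (simp add: C2_def T_def split: prod.split)
  moreover have "closedin T (C3 k)" for k
    unfolding T_def
    by (rule closedin_seq_topology_finite_dependence[of "{int k}"]) (auto simp: C3_def T_def)
  ultimately have "closedin T (C1 \<inter> \<Inter> (range C2) \<inter> \<Inter> (range C3))"
    by (intro closedin_Int closedin_Inter) auto
  moreover have "C1 \<inter> \<Inter> (range C2) \<inter> \<Inter> (range C3) = marked_decompositions \<sigma> w"
    by (auto simp: C1_def C2_def C3_def T_def topspace_seq_topology is_concat_def
        marked_decompositions_def)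
  ultimately show ?thesis by (simp add: T_def)
qed

lemma closedin_Acyl:
  fixes \<sigma> :: "('a::finite) rsub"
  assumes "random_subst \<sigma>"
  shows "closedin PT (Acyl \<sigma> w)"
proof -
  have "compact_space (seq_topology (Bset \<sigma> \<times> (UNIV :: 'a set)))"
    using finite_Bset[OF assms] by (simp add: compact_space_seq_topology)
  then have "compactin (seq_topology (Bset \<sigma> \<times> UNIV)) (marked_decompositions \<sigma> w)"
    using closedin_marked_decompositions[OF assms] by (rule closedin_compact_space)
  then have "compactin PT (Acyl \<sigma> w)"
    unfolding Acyl_eq_image PT_eq_seq_topology
    by (rule image_compactin) (simp add: continuous_map_seq_topology_map)
  then show ?thesis by (rule compactin_imp_closedin[OF Hausdorff_space_PT])
qed

lemma Acyl_word_unique: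
  assumes "random_subst \<sigma>" and "recognisable \<sigma>"
    and "y \<in> Acyl \<sigma> w" and "y \<in> Acyl \<sigma> w'" and "length w = length w'"
  shows "w = w'"
proof -
  obtain x v where xv: "decomposition \<sigma> y x v 0"
    "\<forall>i<length w. x (int i) = fst (w ! i) \<and> v (int i) = snd (w ! i)"
    using decomposition_of_Acyl[OF assms(1,3)] by blast
  obtain x' v' where xv': "decomposition \<sigma> y x' v' 0"
    "\<forall>i<length w'. x' (int i) = fst (w' ! i) \<and> v' (int i) = snd (w' ! i)"
    using decomposition_of_Acyl[OF assms(1,4)] by blast
  have "y \<in> subshift \<sigma>" using assms(1,3) Aset_subset_subshift Acyl_subset_Aset by blast
  then have "x = x'" "v = v'" using decomposition_unique[OF assms(2) _ xv(1) xv'(1)] by auto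
  then show ?thesis using xv(2) xv'(2) assms(5) by (auto intro!: nth_equalityI simp: prod_eq_iff)
qed

lemma shift_by_notin_Acyl_of_Aset:
  assumes "random_subst \<sigma>" and "recognisable \<sigma>" and "y \<in> Aset \<sigma>"
    and "0 < k" and "k < length u"
  shows "shift_by (- int k) y \<notin> Acyl \<sigma> [(b, u)]"
proof
  assume "shift_by (- int k) y \<in> Acyl \<sigma> [(b, u)]"
  then obtain x' v' where dec': "decomposition \<sigma> y x' v' (int k)"
    using decomposition_of_shift_by_in_Acyl assms(5) by (metis of_nat_0_le_iff of_nat_less_iff)
  obtain x v where dec: "decomposition \<sigma> y x v 0"
    using decomposition_of_Acyl[OF assms(1,3)] by blast
  have "y \<in> subshift \<sigma>" using assms(1,3) Aset_subset_subshift by blast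
  then have "0 = int k" using decomposition_unique(3)[OF assms(2) _ dec dec'] by blast
  then show False using assms(4) by simp
qed

text \<open>By recognisability, a point of $X$ outside $[w]_A$ either is not the start of a
  block, or starts a block but is decomposed along a different word of the same length.\<close>

lemma subshift_diff_Acyl:
  assumes "random_subst \<sigma>" and "recognisable \<sigma>"
  shows "subshift \<sigma> - Acyl \<sigma> w = subshift \<sigma> \<inter>
     ((\<Union>p\<in>Bset \<sigma>. \<Union>k\<in>{1..<length (snd p)}. shift_by (- int k) -` Acyl \<sigma> [p])
      \<union> (\<Union>w'\<in>{w'. set w' \<subseteq> Bset \<sigma> \<and> length w' = length w \<and> w' \<noteq> w}. Acyl \<sigma> w'))"
  (is "_ = subshift \<sigma> \<inter> (?Q \<union> ?R)")
proof
  show "subshift \<sigma> - Acyl \<sigma> w \<subseteq> subshift \<sigma> \<inter> (?Q \<union> ?R)"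
  proof
    fix y assume y: "y \<in> subshift \<sigma> - Acyl \<sigma> w"
    then obtain x v k where dec: "decomposition \<sigma> y x v k"
      using decomposition_exists[OF assms(2)] by blast
    have "y \<in> ?Q \<union> ?R"
    proof (cases "k = 0")
      case False
      then have "nat k \<in> {1..<length (v 0)}" "(x 0, v 0) \<in> Bset \<sigma>"
        using dec by (auto simp: decomposition_def Bset_def)
      moreover have "y \<in> shift_by (- int (nat k)) -` Acyl \<sigma> [(x 0, v 0)]"
        using shift_by_in_Acyl_of_decomposition[OF dec] dec by (simp add: decomposition_def)
      ultimately show ?thesis by force
    next
      case True
      define w' where "w' = map (\<lambda>i. (x (int i), v (int i))) [0..<length w]"
      have "y \<in> Acyl \<sigma> w'" using dec True unfolding Acyl_def decomposition_def w'_def by auto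
      moreover have "set w' \<subseteq> Bset \<sigma>" using dec by (auto simp: w'_def decomposition_def Bset_def)
      moreover have "length w' = length w" by (simp add: w'_def)
      ultimately have "y \<in> ?R" using y by blast
      then show ?thesis by blast
    qed
    then show "y \<in> subshift \<sigma> \<inter> (?Q \<union> ?R)" using y by blast
  qed
  show "subshift \<sigma> \<inter> (?Q \<union> ?R) \<subseteq> subshift \<sigma> - Acyl \<sigma> w"
  proof
    fix y assume y: "y \<in> subshift \<sigma> \<inter> (?Q \<union> ?R)"
    have "y \<notin> Acyl \<sigma> w"
    proof
      assume yw: "y \<in> Acyl \<sigma> w"
      have "y \<notin> ?Q"
      proof
        assume "y \<in> ?Q"
        then obtain b u k where "k \<in> {1..<length u}" "shift_by (- int k) y \<in> Acyl \<sigma> [(b, u)]"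
          by force
        then show False
          using shift_by_notin_Acyl_of_Aset[OF assms, of y k u b] yw Acyl_subset_Aset by auto
      qed
      moreover have "y \<notin> ?R" using Acyl_word_unique[OF assms yw] by fastforce
      ultimately show False using y by blast
    qed
    then show "y \<in> subshift \<sigma> - Acyl \<sigma> w" using y by blast
  qed
qed

lemma closedin_subshift_diff_Acyl:
  fixes \<sigma> :: "('a::finite) rsub"
  assumes "random_subst \<sigma>" and "recognisable \<sigma>"
  shows "closedin PT (subshift \<sigma> - Acyl \<sigma> w)"
proof -
  have fin: "finite (Bset \<sigma>)" by (rule finite_Bset[OF assms(1)])
  have "closedin PT (shift_by k -` C)" if "closedin PT C" for k C
    using closedin_continuous_map_preimage[OF continuous_map_shift_by that] by (simp add: vimage_def)
  then have cQ: "closedin PT (\<Union>p\<in>Bset \<sigma>. \<Union>k\<in>{1..<length (snd p)}. shift_by (- int k) -` Acyl \<sigma> [p])"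
    using fin by (intro closedin_Union) (auto intro!: closedin_Union closedin_Acyl[OF assms(1)])
  have "finite {w'. set w' \<subseteq> Bset \<sigma> \<and> length w' = length w \<and> w' \<noteq> w}"
    by (rule finite_subset[OF _ finite_lists_length_eq[OF fin, of "length w"]]) auto
  then have cR: "closedin PT (\<Union>w'\<in>{w'. set w' \<subseteq> Bset \<sigma> \<and> length w' = length w \<and> w' \<noteq> w}. Acyl \<sigma> w')"
    by (intro closedin_Union) (auto intro!: closedin_Acyl[OF assms(1)])
  show ?thesis unfolding subshift_diff_Acyl[OF assms]
    by (intro closedin_Int closedin_Un closedin_subshift cQ cR)
qed

lemma return_time_eq:
  assumes "random_subst \<sigma>" and "recognisable \<sigma>" and "y \<in> Aset \<sigma>"
    and dec: "decomposition \<sigma> y x v 0"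
  shows "return_time \<sigma> y = length (v 0)"
  unfolding return_time_def
proof (rule the_equality)
  show "\<exists>x' v'. x' \<in> subshift \<sigma> \<and> (\<forall>i. v' i \<in> \<sigma> (x' i)) \<and> is_concat v' y
      \<and> length (v 0) = length (v' 0)"
    using dec by (auto simp: decomposition_def)
next
  fix n assume "\<exists>x' v'. x' \<in> subshift \<sigma> \<and> (\<forall>i. v' i \<in> \<sigma> (x' i)) \<and> is_concat v' y
      \<and> n = length (v' 0)"
  then obtain x' v' where xv': "x' \<in> subshift \<sigma>" "\<forall>i. v' i \<in> \<sigma> (x' i)" "is_concat v' y"
    "n = length (v' 0)"
    by blast
  moreover have "v' 0 \<noteq> []" using xv'(2) assms(1) by (metis random_subst_def)
  ultimately have "decomposition \<sigma> y x' v' 0" by (simp add: decomposition_def)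
  moreover have "y \<in> subshift \<sigma>" using assms(1,3) Aset_subset_subshift by blast
  ultimately show "n = length (v 0)"
    using decomposition_unique(2)[OF assms(2) _ dec] xv'(4) by simp
qed

lemma shift_by_notin_Aset:
  assumes "random_subst \<sigma>" and "recognisable \<sigma>"
    and dec: "decomposition \<sigma> y x v 0" and "0 < i" "i < length (v 0)"
  shows "shift_by (int i) y \<notin> Aset \<sigma>"
proof
  assume A: "shift_by (int i) y \<in> Aset \<sigma>"
  obtain x' v' where dec': "decomposition \<sigma> (shift_by (int i) y) x' v' 0"
    using decomposition_of_Acyl[OF assms(1) A] by blast
  have "decomposition \<sigma> (shift_by (int i) y) x v (int i)"
    using dec assms(4,5) by (simp add: decomposition_def shift_by_def)
  moreover have "shift_by (int i) y \<in> subshift \<sigma>" using A Aset_subset_subshift[OF assms(1)] by blast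
  ultimately have "0 = int i" using dec' by (intro decomposition_unique(3)[OF assms(2)])
  then show False using assms(4) by simp
qed

section \<open>Invariant measures\<close>

lemma inv_measuresD:
  assumes "\<nu> \<in> inv_measures \<sigma>"
  shows "prob_space \<nu>" "sets \<nu> = sets Bor" "space \<nu> = UNIV" "distr \<nu> \<nu> shift = \<nu>"
    "emeasure \<nu> (subshift \<sigma>) = 1"
proof -
  show sets: "sets \<nu> = sets Bor" using assms by (simp add: inv_measures_def)
  show "space \<nu> = UNIV" using sets_eq_imp_space_eq[OF sets] by simp
qed (use assms in \<open>auto simp: inv_measures_def\<close>)

lemma integrable_indicator_inv_measure:
  assumes "\<nu> \<in> inv_measures \<sigma>" and "S \<in> sets \<nu>"
  shows "integrable \<nu> (indicator S :: _ \<Rightarrow> real)"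
proof -
  interpret prob_space \<nu> by (rule inv_measuresD(1)[OF assms(1)])
  show ?thesis using assms(2) by (simp add: integrable_indicator_iff less_top[symmetric])
qed

lemma closedin_in_sets: "closedin PT S \<Longrightarrow> \<nu> \<in> inv_measures \<sigma> \<Longrightarrow> S \<in> sets \<nu>"
  using inv_measuresD(2) closedin_imp_sets_Bor by blast

lemma cyl_in_sets: "\<nu> \<in> inv_measures \<sigma> \<Longrightarrow> cyl [a] \<in> sets \<nu>"
  by (rule closedin_in_sets[OF closedin_PT_finite_dependence[of "{0}"]]) (auto simp: cyl_def)

lemma vimage_shift_by_in_sets:
  assumes "\<nu> \<in> inv_measures \<sigma>" and "S \<in> sets \<nu>"
  shows "shift_by k -` S \<in> sets \<nu>"
proof -
  have "shift_by k \<in> measurable \<nu> \<nu>"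
    using continuous_map_imp_measurable_Bor[OF continuous_map_shift_by] inv_measuresD(2)[OF assms(1)]
      measurable_cong_sets by blast
  then have "shift_by k -` S \<inter> space \<nu> \<in> sets \<nu>" using assms(2) by (rule measurable_sets)
  then show ?thesis using inv_measuresD(3)[OF assms(1)] by simp
qed

lemma measure_vimage_shift_by_nat:
  assumes "\<nu> \<in> inv_measures \<sigma>" and "S \<in> sets \<nu>"
  shows "measure \<nu> (shift_by (int n) -` S) = measure \<nu> S"
proof (induction n)
  case (Suc n)
  let ?S = "shift_by (int n) -` S"
  have "shift_by 1 \<in> measurable \<nu> \<nu>"
    using continuous_map_imp_measurable_Bor[OF continuous_map_shift_by] inv_measuresD(2)[OF assms(1)]
      measurable_cong_sets by blast
  then have "measure (distr \<nu> \<nu> (shift_by 1)) ?S = measure \<nu> (shift_by 1 -` ?S \<inter> space \<nu>)"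
    by (rule measure_distr) (rule vimage_shift_by_in_sets[OF assms])
  moreover have "shift_by 1 -` ?S = shift_by (int (Suc n)) -` S"
    by (auto simp: shift_by_shift_by add.commute)
  ultimately show ?case
    using Suc inv_measuresD(3,4)[OF assms(1)] by (simp add: shift_eq_shift_by)
qed simp

lemma measure_vimage_shift_by:
  assumes "\<nu> \<in> inv_measures \<sigma>" and "S \<in> sets \<nu>"
  shows "measure \<nu> (shift_by k -` S) = measure \<nu> S"
proof (cases "0 \<le> k")
  case True
  then show ?thesis using measure_vimage_shift_by_nat[OF assms, of "nat k"] by simp
next
  case False
  define n where "n = nat (- k)"
  have "shift_by (int n) -` (shift_by k -` S) = S"
    using False by (auto simp: n_def shift_by_shift_by)
  moreover have "measure \<nu> (shift_by (int n) -` (shift_by k -` S)) = measure \<nu> (shift_by k -` S)"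
    by (rule measure_vimage_shift_by_nat[OF assms(1) vimage_shift_by_in_sets[OF assms]])
  ultimately show ?thesis by simp
qed

lemma AE_in_subshift:
  fixes \<sigma> :: "('a::finite) rsub"
  assumes "\<nu> \<in> inv_measures \<sigma>"
  shows "AE y in \<nu>. y \<in> subshift \<sigma>"
proof -
  interpret prob_space \<nu> by (rule inv_measuresD(1)[OF assms])
  have "measure \<nu> (subshift \<sigma>) = 1" using inv_measuresD(5)[OF assms] by (simp add: measure_def)
  then show ?thesis
    using AE_in_set_eq_1[OF closedin_in_sets[OF closedin_subshift assms]] by simp
qed

lemma measure_cyl_Nil:
  assumes "\<mu> \<in> inv_measures \<sigma>"
  shows "measure \<mu> (cyl []) = 1"
proof -
  have "cyl [] = space \<mu>" using inv_measuresD(3)[OF assms] by (simp add: cyl_def)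
  then show ?thesis using prob_space.prob_space[OF inv_measuresD(1)[OF assms]] by simp
qed

lemma sum_freq_eq_1:
  fixes \<sigma> :: "('a::finite) rsub"
  assumes "\<nu> \<in> inv_measures \<sigma>"
  shows "(\<Sum>a\<in>UNIV. freq \<nu> a) = 1"
proof -
  interpret prob_space \<nu> by (rule inv_measuresD(1)[OF assms])
  have "(\<Sum>a\<in>UNIV. freq \<nu> a) = (\<Sum>a\<in>UNIV. \<integral>y. indicator (cyl [a]) y \<partial>\<nu>)"
    using cyl_in_sets[OF assms] by (simp add: freq_def)
  also have "\<dots> = (\<integral>y. (\<Sum>a\<in>UNIV. indicator (cyl [a]) y) \<partial>\<nu>)"
    using integrable_indicator_inv_measure[OF assms cyl_in_sets[OF assms]] by simp
  also have "\<dots> = (\<integral>y. 1 \<partial>\<nu>)"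
  proof (rule Bochner_Integration.integral_cong)
    fix y :: "int \<Rightarrow> 'a"
    have "(\<Sum>a\<in>UNIV. indicator (cyl [a]) y :: real) = (\<Sum>a\<in>UNIV. if a = y 0 then 1 else 0)"
      by (intro sum.cong) (auto simp: cyl_def indicator_def)
    then show "(\<Sum>a\<in>UNIV. indicator (cyl [a]) y :: real) = 1" by simp
  qed simp
  finally show ?thesis using prob_space by simp
qed

section \<open>Letter frequencies through cylinders in $A$\<close>

lemma count_list_eq_sum_nth: "real (count_list u a) = (\<Sum>k<length u. of_bool (u ! k = a))"
  by (induction u) (simp_all add: sum.lessThan_Suc_shift del: sum.lessThan_Suc)

lemma shift_by_in_Acyl_iff:
  assumes "recognisable \<sigma>" and "y \<in> subshift \<sigma>" and dec: "decomposition \<sigma> y x v k"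
    and "k' < length u"
  shows "shift_by (- int k') y \<in> Acyl \<sigma> [(b, u)] \<longleftrightarrow> (b, u) = (x 0, v 0) \<and> int k' = k"
proof
  assume "shift_by (- int k') y \<in> Acyl \<sigma> [(b, u)]"
  then obtain x' v' where dec': "decomposition \<sigma> y x' v' (int k')" "x' 0 = b" "v' 0 = u"
    using decomposition_of_shift_by_in_Acyl assms(4) by (metis of_nat_0_le_iff of_nat_less_iff)
  then show "(b, u) = (x 0, v 0) \<and> int k' = k"
    using decomposition_unique[OF assms(1,2) dec dec'(1)] by simp
next
  assume "(b, u) = (x 0, v 0) \<and> int k' = k"
  then show "shift_by (- int k') y \<in> Acyl \<sigma> [(b, u)]"
    using shift_by_in_Acyl_of_decomposition[OF dec] by simp
qed

lemma indicator_cyl_eq_sum: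
  fixes \<sigma> :: "('a::finite) rsub"
  assumes "random_subst \<sigma>" and "recognisable \<sigma>" and y: "y \<in> subshift \<sigma>"
  shows "indicator (cyl [a]) y = (\<Sum>p\<in>Bset \<sigma>. \<Sum>k<length (snd p).
     of_bool (snd p ! k = a) * indicator (shift_by (- int k) -` Acyl \<sigma> [p]) y :: real)"
proof -
  obtain x v k0 where dec: "decomposition \<sigma> y x v k0"
    using decomposition_exists[OF assms(2) y] by blast
  define p0 where "p0 = (x 0, v 0)"
  define k where "k = nat k0"
  have k: "k0 = int k" "k < length (snd p0)" using dec by (auto simp: decomposition_def k_def p0_def)
  have p0: "p0 \<in> Bset \<sigma>" using dec by (auto simp: decomposition_def Bset_def p0_def)
  have "of_bool (snd p ! k' = a) * indicator (shift_by (- int k') -` Acyl \<sigma> [p]) y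
      = (if (p, k') = (p0, k) then of_bool (snd p0 ! k = a) else 0 :: real)"
    if "k' < length (snd p)" for p k'
    using shift_by_in_Acyl_iff[OF assms(2) y dec that, of "fst p"] by (auto simp: p0_def k)
  then have "(\<Sum>p\<in>Bset \<sigma>. \<Sum>k'<length (snd p).
      of_bool (snd p ! k' = a) * indicator (shift_by (- int k') -` Acyl \<sigma> [p]) y :: real)
    = (\<Sum>(p, k')\<in>(SIGMA p:Bset \<sigma>. {..<length (snd p)}).
        if (p, k') = (p0, k) then of_bool (snd p0 ! k = a) else 0)"
    using finite_Bset[OF assms(1)] by (simp add: sum.Sigma)
  also have "\<dots> = (\<Sum>q\<in>(SIGMA p:Bset \<sigma>. {..<length (snd p)}).
        if q = (p0, k) then of_bool (snd p0 ! k = a) else 0)"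
    by (intro sum.cong) (auto split: if_splits)
  also have "\<dots> = of_bool (snd p0 ! k = a)"
    using finite_Bset[OF assms(1)] p0 k(2) by simp
  also have "\<dots> = indicator (cyl [a]) y"
    using decomposition_nth_0[OF dec] by (simp add: p0_def k_def cyl_def indicator_def)
  finally show ?thesis by simp
qed

lemma freq_eq_sum_Acyl:
  fixes \<sigma> :: "('a::finite) rsub"
  assumes "random_subst \<sigma>" and "recognisable \<sigma>" and nu: "\<nu> \<in> inv_measures \<sigma>"
  shows "freq \<nu> a = (\<Sum>p\<in>Bset \<sigma>. real (count_list (snd p) a) * measure \<nu> (Acyl \<sigma> [p]))"
proof -
  have Acyl: "Acyl \<sigma> [p] \<in> sets \<nu>" for p by (rule closedin_in_sets[OF closedin_Acyl[OF assms(1)] nu])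
  let ?E = "\<lambda>p k. shift_by (- int k) -` Acyl \<sigma> [p]"
  have E: "?E p k \<in> sets \<nu>" for p k by (rule vimage_shift_by_in_sets[OF nu Acyl])
  have "freq \<nu> a = (\<integral>y. indicator (cyl [a]) y \<partial>\<nu>)"
    using cyl_in_sets[OF nu] by (simp add: freq_def)
  also have "\<dots> = (\<integral>y. (\<Sum>p\<in>Bset \<sigma>. \<Sum>k<length (snd p). of_bool (snd p ! k = a) * indicator (?E p k) y) \<partial>\<nu>)"
    using AE_in_subshift[OF nu] cyl_in_sets[OF nu] E
    by (intro integral_cong_AE) (auto elim!: eventually_mono simp: indicator_cyl_eq_sum[OF assms(1,2)])
  also have "\<dots> = (\<Sum>p\<in>Bset \<sigma>. \<Sum>k<length (snd p). of_bool (snd p ! k = a) * measure \<nu> (?E p k))"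
    using integrable_indicator_inv_measure[OF nu E] E by simp
  also have "\<dots> = (\<Sum>p\<in>Bset \<sigma>. real (count_list (snd p) a) * measure \<nu> (Acyl \<sigma> [p]))"
    by (simp add: measure_vimage_shift_by[OF nu Acyl] count_list_eq_sum_nth sum_distrib_right)
  finally show ?thesis .
qed

lemma sum_Bset:
  assumes "random_subst (\<sigma> :: ('a::finite) rsub)"
  shows "(\<Sum>p\<in>Bset \<sigma>. g p) = (\<Sum>b\<in>UNIV. \<Sum>u\<in>\<sigma> b. g (b, u))"
proof -
  have "Bset \<sigma> = Sigma UNIV \<sigma>" by (auto simp: Bset_def)
  then show ?thesis using assms by (simp add: sum.Sigma random_subst_def)
qed

lemma induced_Acyl: "induced \<sigma> \<nu> (Acyl \<sigma> w) = measure \<nu> (Acyl \<sigma> w) / measure \<nu> (Aset \<sigma>)"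
  using Acyl_subset_Aset by (metis induced_def inf.absorb1)

lemma sum_MP_eq_lam:
  "(\<Sum>a\<in>UNIV. \<Sum>b\<in>UNIV. MP \<sigma> P a b * freq \<mu> b) = lam \<sigma> \<mu> (P :: 'a::finite list \<Rightarrow> 'a \<Rightarrow> real)"
proof -
  have column: "(\<Sum>a\<in>UNIV. MP \<sigma> P a b) = (\<Sum>u\<in>\<sigma> b. P u b * real (length u))" for b
  proof -
    have "(\<Sum>a\<in>UNIV. MP \<sigma> P a b) = (\<Sum>u\<in>\<sigma> b. \<Sum>a\<in>UNIV. P u b * real (count_list u a))"
      unfolding MP_def by (rule sum.swap)
    also have "\<dots> = (\<Sum>u\<in>\<sigma> b. P u b * real (\<Sum>a\<in>UNIV. count_list u a))"
      by (simp add: sum_distrib_left)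
    also have "\<dots> = (\<Sum>u\<in>\<sigma> b. P u b * real (length u))"
      by (simp add: sum_count_set)
    finally show ?thesis .
  qed
  have "(\<Sum>a\<in>UNIV. \<Sum>b\<in>UNIV. MP \<sigma> P a b * freq \<mu> b) = (\<Sum>b\<in>UNIV. (\<Sum>a\<in>UNIV. MP \<sigma> P a b) * freq \<mu> b)"
    by (subst sum.swap) (simp add: sum_distrib_right)
  then show ?thesis by (simp add: column lam_def mult.commute)
qed

lemma freq_of_desub_in_MP:
  fixes \<sigma> :: "('a::finite) rsub"
  assumes rs: "random_subst \<sigma>" and "recognisable \<sigma>" and mu: "\<mu> \<in> inv_measures \<sigma>"
    and nu: "\<nu> \<in> inv_measures \<sigma>" and ds: "desub_to \<sigma> \<nu> \<mu>" and mp: "in_MP \<sigma> P \<nu>"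
  shows "freq \<nu> a = (1 / lam \<sigma> \<mu> P) * (\<Sum>b\<in>UNIV. MP \<sigma> P a b * freq \<mu> b)"
proof -
  define c where "c = measure \<nu> (Aset \<sigma>)"
  have "desub_cyl \<sigma> \<nu> [] = 1" using ds measure_cyl_Nil[OF mu] by (simp add: desub_to_def)
  then have "c \<noteq> 0" by (auto simp: desub_cyl_def induced_def c_def)
  have "(\<Sum>u\<in>\<sigma> b. induced \<sigma> \<nu> (Acyl \<sigma> [(b, u)])) = freq \<mu> b" for b
    using ds[unfolded desub_to_def, rule_format, of "[b]"]
    by (simp add: desub_cyl_def freq_def sum.reindex inj_on_def)
  then have "induced \<sigma> \<nu> (Acyl \<sigma> [(b, u)]) = P u b * freq \<mu> b" if "u \<in> \<sigma> b" for b u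
    using mp that by (simp add: in_MP_def)
  then have Acyl: "measure \<nu> (Acyl \<sigma> [(b, u)]) = c * (P u b * freq \<mu> b)" if "u \<in> \<sigma> b" for b u
    using that \<open>c \<noteq> 0\<close> by (simp add: induced_Acyl c_def field_simps)
  have freq: "freq \<nu> a = c * (\<Sum>b\<in>UNIV. MP \<sigma> P a b * freq \<mu> b)" for a
  proof -
    have "freq \<nu> a = (\<Sum>b\<in>UNIV. \<Sum>u\<in>\<sigma> b. real (count_list u a) * measure \<nu> (Acyl \<sigma> [(b, u)]))"
      by (simp add: freq_eq_sum_Acyl[OF assms(1,2) nu] sum_Bset[OF rs])
    also have "\<dots> = c * (\<Sum>b\<in>UNIV. MP \<sigma> P a b * freq \<mu> b)"
      by (simp add: Acyl MP_def sum_distrib_left sum_distrib_right ac_simps)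
    finally show ?thesis .
  qed
  have "c * lam \<sigma> \<mu> P = 1"
    using sum_freq_eq_1[OF nu] by (simp add: freq sum_MP_eq_lam flip: sum_distrib_left)
  then have "c = 1 / lam \<sigma> \<mu> P" by (simp add: eq_divide_eq mult.commute) (use \<open>c \<noteq> 0\<close> in auto)
  then show ?thesis using freq by simp
qed

section \<open>The transfer\<close>

lemma sum_return_time_eq:
  assumes "random_subst \<sigma>" and "recognisable \<sigma>" and y: "y \<in> Aset \<sigma>"
    and f: "\<forall>z\<in>subshift \<sigma> - Aset \<sigma>. f z = 0"
  shows "(\<Sum>i<return_time \<sigma> y. f ((shift ^^ i) y)) = f y"
proof -
  obtain x v where dec: "decomposition \<sigma> y x v 0"
    using decomposition_of_Acyl[OF assms(1) y] by blast
  then obtain r where r: "return_time \<sigma> y = Suc r"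
    using return_time_eq[OF assms(1,2) y dec] by (metis decomposition_def gr0_implies_Suc of_nat_0_less_iff)
  have "f ((shift ^^ Suc i) y) = 0" if "i < r" for i
  proof -
    have "shift_by (int (Suc i)) y \<notin> Aset \<sigma>"
      using that r return_time_eq[OF assms(1,2) y dec] by (intro shift_by_notin_Aset[OF assms(1,2) dec]) auto
    moreover have "shift_by (int (Suc i)) y \<in> subshift \<sigma>"
      using y Aset_subset_subshift[OF assms(1)] shift_by_in_subshift by blast
    ultimately have "f (shift_by (int (Suc i)) y) = 0" using f by blast
    then show ?thesis by (simp only: funpow_shift)
  qed
  then show ?thesis unfolding r by (simp add: sum.lessThan_Suc_shift del: sum.lessThan_Suc)
qed

lemma indicator_Aset_times_return_sum:
  fixes f :: "(int \<Rightarrow> 'a) \<Rightarrow> real"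
  assumes rs: "random_subst \<sigma>" and rec: "recognisable \<sigma>"
    and f: "\<forall>z\<in>subshift \<sigma>. f z = indicator (Acyl \<sigma> w) z"
  shows "indicator (Aset \<sigma>) y * (\<Sum>i<return_time \<sigma> y. f ((shift ^^ i) y)) = indicator (Acyl \<sigma> w) y"
proof (cases "y \<in> Aset \<sigma>")
  case True
  have "\<forall>z\<in>subshift \<sigma> - Aset \<sigma>. f z = 0"
    using f Acyl_subset_Aset by (auto simp: indicator_def)
  then have "(\<Sum>i<return_time \<sigma> y. f ((shift ^^ i) y)) = f y"
    by (rule sum_return_time_eq[OF rs rec True])
  also have "\<dots> = indicator (Acyl \<sigma> w) y"
    using True Aset_subset_subshift[OF rs] f by blast
  finally show ?thesis using True by simp
qed (use Acyl_subset_Aset in \<open>auto simp: indicator_def\<close>)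

lemma is_transferD:
  assumes "is_transfer \<sigma> P \<mu> m \<nu>"
  shows "prob_space m" "sets m = sets Bor" "emeasure m (Aset \<sigma>) = 1" "\<nu> \<in> inv_measures \<sigma>"
    "\<forall>w\<in>lists (Bset \<sigma>). measure m (Acyl \<sigma> w)
            = measure \<mu> (cyl (map fst w)) * prod_list (map (\<lambda>(a, v). P v a) w)"
    "\<And>f. continuous_map PT euclideanreal f \<Longrightarrow>
        (\<integral>x. f x \<partial>\<nu>) = (1 / lam \<sigma> \<mu> P) *
           (\<integral>y. indicator (Aset \<sigma>) y * (\<Sum>i<return_time \<sigma> y. f ((shift ^^ i) y)) \<partial>m)"
  using assms by (auto simp: is_transfer_def is_thetaP_def)

lemma lam_neq_0_of_transfer:
  assumes "is_transfer \<sigma> P \<mu> m \<nu>"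
  shows "lam \<sigma> \<mu> P \<noteq> 0"
proof
  assume "lam \<sigma> \<mu> P = 0"
  moreover have "continuous_map PT euclideanreal (\<lambda>_. 1::real)" by simp
  note is_transferD(6)[OF assms this]
  ultimately have "(\<integral>x. 1 \<partial>\<nu>) = (0::real)" by simp
  then show False using prob_space.prob_space[OF inv_measuresD(1)[OF is_transferD(4)[OF assms]]] by simp
qed

text \<open>$[w]_A$ and $X \setminus [w]_A$ are disjoint closed sets, so by Urysohn some continuous $f$
  agrees with the indicator of $[w]_A$ on $X$; this $f$ tests the defining identity of $T_P(\mu)$.\<close>

lemma measure_transfer_Acyl:
  fixes \<sigma> :: "('a::finite) rsub"
  assumes rs: "random_subst \<sigma>" and rec: "recognisable \<sigma>" and tr: "is_transfer \<sigma> P \<mu> m \<nu>"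
  shows "measure \<nu> (Acyl \<sigma> w) = (1 / lam \<sigma> \<mu> P) * measure m (Acyl \<sigma> w)"
proof -
  have nu: "\<nu> \<in> inv_measures \<sigma>" by (rule is_transferD(4)[OF tr])
  obtain f :: "(int \<Rightarrow> 'a) \<Rightarrow> real" where fc: "continuous_map PT euclideanreal f"
    and f1: "f ` Acyl \<sigma> w \<subseteq> {1}" and f0: "f ` (subshift \<sigma> - Acyl \<sigma> w) \<subseteq> {0}"
    using Urysohn_lemma_alt[OF normal_space_PT closedin_Acyl[OF rs, of w]
        closedin_subshift_diff_Acyl[OF rs rec, of w], of 1 0]
    by (auto simp: disjnt_def)
  have fX: "f y = indicator (Acyl \<sigma> w) y" if "y \<in> subshift \<sigma>" for y
    using that f1 f0 by (cases "y \<in> Acyl \<sigma> w") auto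
  have "(\<integral>y. f y \<partial>\<nu>) = (\<integral>y. indicator (Acyl \<sigma> w) y \<partial>\<nu>)"
  proof (rule integral_cong_AE)
    show "f \<in> borel_measurable \<nu>"
      using continuous_map_imp_borel_measurable_Bor[OF fc] inv_measuresD(2)[OF nu]
        measurable_cong_sets by blast
    show "AE y in \<nu>. f y = indicator (Acyl \<sigma> w) y"
      using AE_in_subshift[OF nu] by eventually_elim (rule fX)
  qed (use closedin_in_sets[OF closedin_Acyl[OF rs] nu] in simp)
  also have "\<dots> = measure \<nu> (Acyl \<sigma> w)"
    using closedin_in_sets[OF closedin_Acyl[OF rs] nu] inv_measuresD(3)[OF nu] by simp
  finally have lhs: "(\<integral>y. f y \<partial>\<nu>) = measure \<nu> (Acyl \<sigma> w)" .
  have "indicator (Aset \<sigma>) y * (\<Sum>i<return_time \<sigma> y. f ((shift ^^ i) y)) = indicator (Acyl \<sigma> w) y"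
    for y using indicator_Aset_times_return_sum[OF rs rec] fX by blast
  then have "(\<integral>y. indicator (Aset \<sigma>) y * (\<Sum>i<return_time \<sigma> y. f ((shift ^^ i) y)) \<partial>m)
      = measure m (Acyl \<sigma> w)"
    using sets_eq_imp_space_eq[OF is_transferD(2)[OF tr]] by simp
  then show ?thesis using is_transferD(6)[OF tr fc] lhs by simp
qed

lemma in_listset_iff: "xs \<in> listset As \<longleftrightarrow> list_all2 (\<in>) xs As"
  by (induction As arbitrary: xs) (auto simp: set_Cons_def list_all2_Cons2)

lemma sum_listset_prod_list:
  "(\<Sum>vs\<in>listset (map \<sigma> u). \<Prod>(a, v)\<leftarrow>zip u vs. f a v) = (\<Prod>a\<leftarrow>u. \<Sum>v\<in>\<sigma> a. f a v :: real)"
proof (induction u)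
  case (Cons c u)
  let ?L = "listset (map \<sigma> u)" and ?F = "\<lambda>u vs. \<Prod>(a, v)\<leftarrow>zip u vs. f a v"
  have "inj_on (\<lambda>(v, vs). v # vs) (\<sigma> c \<times> ?L)"
    by (auto simp: inj_on_def)
  moreover have "listset (map \<sigma> (c # u)) = (\<lambda>(v, vs). v # vs) ` (\<sigma> c \<times> ?L)"
    by (auto simp: set_Cons_def)
  ultimately have "(\<Sum>vs\<in>listset (map \<sigma> (c # u)). ?F (c # u) vs)
      = (\<Sum>(v, vs)\<in>\<sigma> c \<times> ?L. f c v * ?F u vs)"
    by (rule sum.reindex_cong) auto
  also have "\<dots> = (\<Sum>v\<in>\<sigma> c. f c v) * (\<Sum>vs\<in>?L. ?F u vs)"
    by (simp add: sum.cartesian_product[symmetric] sum_product)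
  finally show ?case using Cons.IH by simp
qed simp

lemma transfer_desub_in_MP:
  fixes \<sigma> :: "('a::finite) rsub"
  assumes rs: "random_subst \<sigma>" and rec: "recognisable \<sigma>" and pc: "prob_choice \<sigma> P"
    and tr: "is_transfer \<sigma> P \<mu> m \<nu>"
  shows "desub_to \<sigma> \<nu> \<mu>" and "in_MP \<sigma> P \<nu>"
proof -
  have "measure m (Aset \<sigma>) = 1" using is_transferD(3)[OF tr] by (simp add: measure_def)
  then have induced: "induced \<sigma> \<nu> (Acyl \<sigma> w) = measure m (Acyl \<sigma> w)" for w
    using lam_neq_0_of_transfer[OF tr]
    by (simp add: induced_Acyl measure_transfer_Acyl[OF rs rec tr])
  have "measure m (Acyl \<sigma> (zip u vs)) = measure \<mu> (cyl u) * (\<Prod>(a, v)\<leftarrow>zip u vs. P v a)"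
    if "vs \<in> listset (map \<sigma> u)" for u vs
  proof -
    have "length vs = length u" "\<forall>i<length u. vs ! i \<in> \<sigma> (u ! i)"
      using that by (auto simp: in_listset_iff list_all2_conv_all_nth)
    then have "zip u vs \<in> lists (Bset \<sigma>)" "map fst (zip u vs) = u"
      by (auto simp: Bset_def set_zip)
    then show ?thesis using is_transferD(5)[OF tr] by metis
  qed
  then have Acyl: "induced \<sigma> \<nu> (Acyl \<sigma> (zip u vs)) = measure \<mu> (cyl u) * (\<Prod>(a, v)\<leftarrow>zip u vs. P v a)"
    if "vs \<in> listset (map \<sigma> u)" for u vs
    using that by (simp add: induced)
  have "(\<Prod>a\<leftarrow>u. \<Sum>v\<in>\<sigma> a. P v a) = 1" for u
    using pc by (induction u) (simp_all add: prob_choice_def)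
  then show "desub_to \<sigma> \<nu> \<mu>"
    unfolding desub_to_def desub_cyl_def
    by (simp add: Acyl sum_listset_prod_list flip: sum_distrib_left)
  show "in_MP \<sigma> P \<nu>"
    unfolding in_MP_def
  proof (intro conjI is_transferD(4)[OF tr] allI ballI)
    fix a v assume v: "v \<in> \<sigma> a"
    have single: "induced \<sigma> \<nu> (Acyl \<sigma> [(a, u)]) = measure \<mu> (cyl [a]) * P u a" if "u \<in> \<sigma> a" for u
      using Acyl[of "[u]" "[a]"] that by simp
    then have "(\<Sum>u\<in>\<sigma> a. induced \<sigma> \<nu> (Acyl \<sigma> [(a, u)])) = measure \<mu> (cyl [a])"
      using pc by (simp add: prob_choice_def flip: sum_distrib_left)
    then show "induced \<sigma> \<nu> (Acyl \<sigma> [(a, v)]) = P v a * (\<Sum>u\<in>\<sigma> a. induced \<sigma> \<nu> (Acyl \<sigma> [(a, u)]))"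
      using single[OF v] by simp
  qed
qed

lemma freq_transfer:
  fixes \<sigma> :: "('a::finite) rsub"
  assumes "random_subst \<sigma>" and "recognisable \<sigma>" and "\<mu> \<in> inv_measures \<sigma>"
    and "prob_choice \<sigma> P" and "is_transfer \<sigma> P \<mu> m \<nu>"
  shows "freq \<nu> a = (1 / lam \<sigma> \<mu> P) * (\<Sum>b\<in>UNIV. MP \<sigma> P a b * freq \<mu> b)"
  using freq_of_desub_in_MP[OF assms(1-3) is_transferD(4)[OF assms(5)]]
    transfer_desub_in_MP[OF assms(1,2,4,5)] by blast

theorem mainTheorem8:
  fixes \<sigma> :: "('a::finite) rsub" and \<mu> :: "(int \<Rightarrow> 'a) measure"
    and P :: "'a list \<Rightarrow> 'a \<Rightarrow> real"
  assumes "random_subst \<sigma>" and "primitive \<sigma>" and "geom_compatible \<sigma>"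
    and "recognisable \<sigma>"
    and "\<mu> \<in> inv_measures \<sigma>" and "prob_choice \<sigma> P"
  shows "(\<forall>\<nu>. \<nu> \<in> inv_measures \<sigma> \<and> desub_to \<sigma> \<nu> \<mu> \<and> in_MP \<sigma> P \<nu> \<longrightarrow>
            (\<forall>a. freq \<nu> a = (1 / lam \<sigma> \<mu> P) * (\<Sum>b\<in>UNIV. MP \<sigma> P a b * freq \<mu> b)))
       \<and> (\<forall>m \<nu>. is_transfer \<sigma> P \<mu> m \<nu> \<longrightarrow>
            desub_to \<sigma> \<nu> \<mu> \<and> in_MP \<sigma> P \<nu> \<and>
            (\<forall>a. freq \<nu> a = (1 / lam \<sigma> \<mu> P) * (\<Sum>b\<in>UNIV. MP \<sigma> P a b * freq \<mu> b)))
       \<and> (\<forall>\<mu>' m \<nu> m' \<nu>'. \<mu>' \<in> inv_measures \<sigma> \<and> (\<forall>a. freq \<mu> a = freq \<mu>' a) \<and>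
            is_transfer \<sigma> P \<mu> m \<nu> \<and> is_transfer \<sigma> P \<mu>' m' \<nu>' \<longrightarrow>
            (\<forall>a. freq \<nu> a = freq \<nu>' a))"
proof (intro conjI allI impI)
  note rs = assms(1) and rec = assms(4) and mu = assms(5) and pc = assms(6)
  show "freq \<nu> a = (1 / lam \<sigma> \<mu> P) * (\<Sum>b\<in>UNIV. MP \<sigma> P a b * freq \<mu> b)"
    if "\<nu> \<in> inv_measures \<sigma> \<and> desub_to \<sigma> \<nu> \<mu> \<and> in_MP \<sigma> P \<nu>" for \<nu> a
    using freq_of_desub_in_MP[OF rs rec mu] that by blast
  fix m \<nu> assume tr: "is_transfer \<sigma> P \<mu> m \<nu>"
  show "desub_to \<sigma> \<nu> \<mu>" "in_MP \<sigma> P \<nu>" by (fact transfer_desub_in_MP[OF rs rec pc tr])+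
  show "freq \<nu> a = (1 / lam \<sigma> \<mu> P) * (\<Sum>b\<in>UNIV. MP \<sigma> P a b * freq \<mu> b)" for a
    by (rule freq_transfer[OF rs rec mu pc tr])
next
  fix \<mu>' m \<nu> m' \<nu>' a
  assume "\<mu>' \<in> inv_measures \<sigma> \<and> (\<forall>a. freq \<mu> a = freq \<mu>' a) \<and>
      is_transfer \<sigma> P \<mu> m \<nu> \<and> is_transfer \<sigma> P \<mu>' m' \<nu>'"
  then have "freq \<nu> a = (1 / lam \<sigma> \<mu>' P) * (\<Sum>b\<in>UNIV. MP \<sigma> P a b * freq \<mu>' b)"
    and "freq \<nu>' a = (1 / lam \<sigma> \<mu>' P) * (\<Sum>b\<in>UNIV. MP \<sigma> P a b * freq \<mu>' b)"
    using freq_transfer[OF assms(1,4) _ assms(6)] assms(5) by (auto simp: lam_def)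
  then show "freq \<nu> a = freq \<nu>' a" by simp
qed

end
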